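(* For every positive integer $n$, $l_1(n)=a_1(n)=2^{n-1}$.
   Context: For a positive integer $m$, the triangle $T_m$ is an array whose row $x$ ($x=1,2,\dots$) has $x$ entries, in columns $0,\dots,x-1$. Row $1$ is the single entry $1$. For $x>1$, row $x$ is obtained from row $x-1$ by rotating it cyclically left by $m$ positions (the entry in column $c$ of row $x-1$ moves to column $(c-m)\bmod(x-1)\in\{0,\dots,x-2\}$ of row $x$), then appending in column $x-1$ a new entry equal to $1$ plus the entry in column $0$ of row $x-1$. $T_m(x,c)$ denotes the entry in row $x$, column $c$. Define $l_m(1)=1$ and, for $n\ge2$, $l_m(n)=\min\{x>l_m(n-1): T_m(x,0)=1\}$ (the rows headed by the value $1$); define $a_m(n)=\min\{x\in\mathbb{N}: T_m(x,x-1)=n\}$ (the row in which the value $n$ first appears). Here $m=1$. *)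

theory Defs
  imports Main
begin

text \<open>Row x of the triangle T_m, as a list of its x entries (columns 0..x-1).
  Row 0 is a dummy (empty). List.rotate m is cyclic left rotation by m:
  (rotate m xs) ! d = xs ! ((d + m) mod length xs), i.e. the entry in column c
  moves to column (c - m) mod (x-1).\<close>
fun Trow :: "nat \<Rightarrow> nat \<Rightarrow> nat list" where
  "Trow m 0 = []"
| "Trow m (Suc 0) = [1]"
| "Trow m (Suc (Suc k)) =
     rotate m (Trow m (Suc k)) @ [1 + hd (Trow m (Suc k))]"

definition T :: "nat \<Rightarrow> nat \<Rightarrow> nat \<Rightarrow> nat" where
  "T m x c = Trow m x ! c"

fun l :: "nat \<Rightarrow> nat \<Rightarrow> nat" where
  "l m 0 = 1"
| "l m (Suc 0) = 1"
| "l m (Suc (Suc k)) = (LEAST x. x > l m (Suc k) \<and> T m x 0 = 1)"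

definition a :: "nat \<Rightarrow> nat \<Rightarrow> nat" where
  "a m n = (LEAST x. x \<ge> 1 \<and> T m x (x - 1) = n)"

end

theory Submission
  imports Defs
begin

text \<open>Write \<open>s(y)\<close> for the number of ones in the binary expansion of \<open>y\<close>. For \<open>m = 1\<close>
  row \<open>x\<close> is the window \<open>s(x), \<dots>, s(2x - 1)\<close>: rotating row \<open>x - 1\<close> left by one leaves
  \<open>s(x), \<dots>, s(2x - 3)\<close> followed by \<open>s(x - 1) = s(2x - 2)\<close>, and the appended entry is
  \<open>1 + s(x - 1) = s(2x - 1)\<close>. Hence \<open>T\<^sub>1(x, 0) = 1\<close> exactly when \<open>x\<close> is a power of two, and
  \<open>T\<^sub>1(x, x - 1) = s(2x - 1) = n\<close> forces \<open>2x \<ge> 2\<^sup>n\<close>, with equality attained at \<open>x = 2\<^sup>n\<^sup>-\<^sup>1\<close>.\<close>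

fun popcount :: "nat \<Rightarrow> nat" where
  "popcount 0 = 0"
| "popcount (Suc n) = popcount (Suc n div 2) + Suc n mod 2"

lemma popcount_rec: "popcount n = popcount (n div 2) + n mod 2"
  by (cases n) auto

lemma popcount_1 [simp]: "popcount (Suc 0) = 1"
  by simp

declare popcount.simps(2) [simp del]

lemma popcount_double [simp]: "popcount (2 * n) = popcount n"
  using popcount_rec [of "2 * n"] by simp

lemma popcount_double_Suc [simp]: "popcount (Suc (2 * n)) = Suc (popcount n)"
  using popcount_rec [of "Suc (2 * n)"] by simp

lemma popcount_eq_0_iff [simp]: "popcount n = 0 \<longleftrightarrow> n = 0"
proof (induction n rule: nat_less_induct)
  case (1 n)
  show ?case
  proof (cases "even n")
    case True
    then obtain k where "n = 2 * k" by blast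
    with "1.IH" show ?thesis by (cases "k = 0") auto
  next
    case False
    then show ?thesis by (auto elim!: oddE)
  qed
qed

lemma popcount_power_of_two [simp]: "popcount (2 ^ j) = 1"
  by (induction j) simp_all

lemma popcount_eq_1_imp_power_of_two: "popcount n = 1 \<Longrightarrow> \<exists>j. n = 2 ^ j"
proof (induction n rule: nat_less_induct)
  case (1 n)
  show ?case
  proof (cases "even n")
    case True
    then obtain k where k: "n = 2 * k" by blast
    with "1.prems" have "popcount k = 1" and "k < n" by (auto intro!: Nat.gr0I)
    with "1.IH" obtain j where "k = 2 ^ j" by blast
    with k have "n = 2 ^ Suc j" by simp
    then show ?thesis ..
  next
    case False
    then obtain k where "n = Suc (2 * k)" using oddE by fastforce
    with "1.prems" have "n = 2 ^ 0" by simp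
    then show ?thesis ..
  qed
qed

lemma power_popcount_le: "2 ^ popcount n \<le> Suc n"
proof (induction n rule: nat_less_induct)
  case (1 n)
  show ?case
  proof (cases "n = 0")
    case False
    then have "n div 2 < n" by simp
    with "1.IH" have "2 ^ popcount (n div 2) \<le> Suc (n div 2)" by blast
    then show ?thesis
      by (cases "even n") (auto elim!: evenE oddE)
  qed simp
qed

lemma popcount_mask: "popcount (2 ^ n - 1) = n"
proof (induction n)
  case (Suc n)
  have "(1::nat) \<le> 2 ^ n" by simp
  then have "(2::nat) ^ Suc n - 1 = Suc (2 * (2 ^ n - 1))"
    unfolding power_Suc by linarith
  with Suc show ?case by simp
qed simp

lemma Trow_1_eq_popcount:
  "length (Trow 1 (Suc k)) = Suc k \<and>
   (\<forall>c < Suc k. Trow 1 (Suc k) ! c = popcount (Suc k + c))"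
proof (induction k)
  case 0
  show ?case using popcount_double [of 1] by simp
next
  case (Suc k)
  define R where "R = Trow 1 (Suc k)"
  have len: "length R = Suc k" and R_nth: "\<And>c. c < Suc k \<Longrightarrow> R ! c = popcount (Suc k + c)"
    using Suc unfolding R_def by auto
  have hd: "hd R = popcount (Suc k)"
    using len R_nth [of 0] by (cases R) auto
  have row: "Trow 1 (Suc (Suc k)) = rotate1 R @ [1 + hd R]"
    unfolding R_def by simp
  have "(rotate1 R @ [1 + hd R]) ! c = popcount (Suc (Suc k) + c)"
    if c: "c < Suc (Suc k)" for c
  proof -
    consider "c < k" | "c = k" | "c = Suc k" using c by (auto simp: less_Suc_eq)
    then show ?thesis
    proof cases
      case 1
      then show ?thesis using len R_nth [of "Suc c"] by (simp add: nth_append nth_rotate1)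
    next
      case 2
      then show ?thesis
        using len R_nth [of 0] popcount_double [of "Suc k"]
        by (simp add: nth_append nth_rotate1 mult_2)
    next
      case 3
      then show ?thesis
        using len hd popcount_double_Suc [of "Suc k"] by (simp add: nth_append mult_2)
    qed
  qed
  with len show ?case unfolding row by simp
qed

lemma T_1_eq_popcount: "1 \<le> x \<Longrightarrow> c < x \<Longrightarrow> T 1 x c = popcount (x + c)"
  using Trow_1_eq_popcount [of "x - 1"] unfolding T_def by simp

lemma l_1_Suc: "l 1 (Suc k) = 2 ^ k"
proof (induction k)
  case (Suc k)
  have "l 1 (Suc (Suc k)) = (LEAST x. 2 ^ k < x \<and> T 1 x 0 = 1)"
    using Suc by simp
  also have "\<dots> = 2 ^ Suc k"
  proof (rule Least_equality)
    show "2 ^ k < (2::nat) ^ Suc k \<and> T 1 (2 ^ Suc k) 0 = 1"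
      using T_1_eq_popcount [of "2 ^ Suc k" 0] by simp
  next
    fix x :: nat
    assume x: "2 ^ k < x \<and> T 1 x 0 = 1"
    then have "popcount x = 1" using T_1_eq_popcount [of x 0] by simp
    then obtain j where j: "x = 2 ^ j" using popcount_eq_1_imp_power_of_two by blast
    with x have "k < j" by simp
    with j show "2 ^ Suc k \<le> x" by (simp only:) (rule power_increasing, simp_all)
  qed
  finally show ?case .
qed simp

lemma a_1_Suc: "a 1 (Suc k) = 2 ^ k"
  unfolding a_def
proof (rule Least_equality)
  have "(2::nat) ^ k + (2 ^ k - 1) = 2 ^ Suc k - 1" by simp
  then show "1 \<le> (2::nat) ^ k \<and> T 1 (2 ^ k) (2 ^ k - 1) = Suc k"
    using T_1_eq_popcount [of "2 ^ k" "2 ^ k - 1"] popcount_mask [of "Suc k"] by simp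
next
  fix x :: nat
  assume x: "1 \<le> x \<and> T 1 x (x - 1) = Suc k"
  then have "popcount (x + (x - 1)) = Suc k" using T_1_eq_popcount [of x "x - 1"] by simp
  then have "2 ^ Suc k \<le> Suc (x + (x - 1))" using power_popcount_le by metis
  with x show "2 ^ k \<le> x" by simp
qed

theorem mainTheorem15:
  fixes n :: nat
  assumes "n \<ge> 1"
  shows "l 1 n = 2 ^ (n - 1) \<and> a 1 n = 2 ^ (n - 1)"
proof -
  obtain k where "n = Suc k" using assms by (cases n) auto
  then show ?thesis using l_1_Suc a_1_Suc by simp
qed

end
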